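(* Let $T$ be the BFS tree produced by temporal BFS on a temporal graph $G=(V,E)$ from source $s$ with starting time $t_s$, let $v\neq s$ be a vertex reachable from $s$, and let $v_o$ be the occurrence of $v$ in $T$ of smallest level (the first occurrence of $v$). Then the level of $v_o$ equals $dist(s,v)$, the minimum number of hops of a temporal path from $s$ to $v$ starting at or after $t_s$.
   Context: A temporal graph is a pair $G=(V,E)$ where $V$ is a finite set of vertices and $E$ is a finite set of temporal edges, i.e. triples $(u,v,t)$ with $u,v\in V$, $u\neq v$, $t\in\mathbb{R}$ (the time at which the edge is active); distinct elements of $E$ are distinct triples. Fix $t_s\in\mathbb{R}$ and $s\in V$. A temporal path from $x$ to $y$ (starting at or after $t_s$) is a sequence $P=\langle (w_1,w_2,t_1),\dots,(w_k,w_{k+1},t_k)\rangle$ of $k\ge1$ edges of $E$ with $w_1=x$, $w_{k+1}=y$ and $t_s\le t_1\le t_2\le\dots\le t_k$; its number of hops is $k$. A vertex $y$ is reachable from $s$ if such a path from $s$ to $y$ exists. Temporal BFS. Records are tuples $(x,d,\tau,p)$ (vertex $x$, level $d$, time $\tau$, predecessor record $p$ or none); every record ever created is an occurrence (node) of the BFS tree $T$, rooted at the initial record, with a tree edge from the predecessor record to the record; the level and time of an occurrence are the final values of its fields. For each $x\in V$ a current value $\sigma(x)$ is kept, initially $\infty$, and set to $\tau$ whenever a record of $x$ is created or its time is updated to $\tau$. Initially the FIFO queue $Q$ contains only $(s,0,t_s,\text{none})$ and $\sigma(s)=t_s$; no edge is traversed. While $Q\neq\emptyset$: pop the front record $R=(u,d_u,\sigma_u,p_u)$;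 let $B$ be the set of edges $(u,v,t)\in E$ not yet traversed with $\sigma_u\le t$; for each vertex $v$ such that $B$ contains an edge to $v$ (in any order), let $e=(u,v,t)$ be the edge of $B$ to $v$ with smallest $t$, mark $e$ traversed, and: (i) if $Q$ contains no record of $v$ and $\sigma(v)>t$, create $(v,d_u+1,t,R)$ and append it to $Q$; (ii) if $Q$ contains a record of $v$ with level $d_u+1$ and $\sigma(v)>t$, set that record's time to $t$ and predecessor to $R$; (iii) if $Q$ contains a record of $v$ but none with level $d_u+1$, and $\sigma(v)>t$, create $(v,d_u+1,t,R)$ and append it to $Q$. *)

theory Defs
  imports Main "HOL-Library.Extended_Real"
begin

type_synonym 'v tedge = "'v \<times> 'v \<times> real"

definition esrc :: "'v tedge \<Rightarrow> 'v" where "esrc e = fst e"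
definition etgt :: "'v tedge \<Rightarrow> 'v" where "etgt e = fst (snd e)"
definition etime :: "'v tedge \<Rightarrow> real" where "etime e = snd (snd e)"

definition temporal_path :: "'v tedge set \<Rightarrow> real \<Rightarrow> 'v \<Rightarrow> 'v \<Rightarrow> 'v tedge list \<Rightarrow> bool" where
  "temporal_path E ts x y P \<longleftrightarrow>
     P \<noteq> [] \<and> set P \<subseteq> E \<and> esrc (hd P) = x \<and> etgt (last P) = y \<and> ts \<le> etime (hd P) \<and>
     (\<forall>i. Suc i < length P \<longrightarrow> etgt (P ! i) = esrc (P ! Suc i) \<and> etime (P ! i) \<le> etime (P ! Suc i))"

definition t_reachable :: "'v tedge set \<Rightarrow> real \<Rightarrow> 'v \<Rightarrow> 'v \<Rightarrow> bool" where
  "t_reachable E ts x y \<longleftrightarrow> (\<exists>P. temporal_path E ts x y P)"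

definition tdist :: "'v tedge set \<Rightarrow> real \<Rightarrow> 'v \<Rightarrow> 'v \<Rightarrow> nat" where
  "tdist E ts x y = (LEAST k. \<exists>P. temporal_path E ts x y P \<and> length P = k)"

text \<open>BFS records (occurrences), identified by their index in the list of all records ever created.\<close>
record 'v bfs_rec =
  rv :: 'v
  rlev :: nat
  rtime :: real
  rpred :: "nat option"

record 'v bfs_state =
  recs :: "'v bfs_rec list"
  que :: "nat list"
  sig :: "'v \<Rightarrow> ereal"
  trav :: "'v tedge set"

definition bfs_init :: "'v \<Rightarrow> real \<Rightarrow> 'v bfs_state" where
  "bfs_init s ts = \<lparr>recs = [\<lparr>rv = s, rlev = 0, rtime = ts, rpred = None\<rparr>], que = [0],
                     sig = (\<lambda>x. \<infinity>)(s := ereal ts), trav = {}\<rparr>"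

definition Bset :: "'v tedge set \<Rightarrow> 'v bfs_state \<Rightarrow> nat \<Rightarrow> 'v tedge set" where
  "Bset E S r = {e \<in> E. e \<notin> trav S \<and> esrc e = rv (recs S ! r) \<and> rtime (recs S ! r) \<le> etime e}"

definition targets :: "'v tedge set \<Rightarrow> 'v set" where
  "targets B = etgt ` B"

definition mintime :: "'v tedge set \<Rightarrow> 'v \<Rightarrow> real" where
  "mintime B v = Min (etime ` {e \<in> B. etgt e = v})"

definition process :: "'v tedge set \<Rightarrow> nat \<Rightarrow> 'v \<Rightarrow> 'v bfs_state \<Rightarrow> 'v bfs_state" where
  "process B r v S =
    (let R = recs S ! r; t = mintime B v; d = Suc (rlev R);
         S1 = S\<lparr>trav := insert (rv R, v, t) (trav S)\<rparr>;
         inQ = {i \<in> set (que S). rv (recs S ! i) = v};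
         inQd = {i \<in> inQ. rlev (recs S ! i) = d};
         create = S1\<lparr>recs := recs S @ [\<lparr>rv = v, rlev = d, rtime = t, rpred = Some r\<rparr>],
                     que := que S @ [length (recs S)], sig := (sig S)(v := ereal t)\<rparr>;
         update = S1\<lparr>recs := map (\<lambda>i. if i \<in> inQd then (recs S ! i)\<lparr>rtime := t, rpred := Some r\<rparr>
                                      else recs S ! i) [0..<length (recs S)],
                     sig := (sig S)(v := ereal t)\<rparr>
     in if \<not> (sig S v > ereal t) then S1
        else if inQ = {} then create
        else if inQd \<noteq> {} then update
        else create)"

definition bfs_step :: "'v tedge set \<Rightarrow> 'v bfs_state \<Rightarrow> 'v bfs_state \<Rightarrow> bool" where
  "bfs_step E S S' \<longleftrightarrow>
     (\<exists>r rest vs. que S = r # rest \<and> distinct vs \<and> set vs = targets (Bset E S r) \<and>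
        S' = fold (process (Bset E S r) r) vs (S\<lparr>que := rest\<rparr>))"

definition occ_levels :: "'v bfs_state \<Rightarrow> 'v \<Rightarrow> nat set" where
  "occ_levels S v = {rlev (recs S ! i) | i. i < length (recs S) \<and> rv (recs S ! i) = v}"

end

theory Submission
  imports Defs
begin

text \<open>Soundness: every record (x, d, \<tau>) ever created is witnessed by a temporal path of d hops
  from s to x whose last edge is at time at most \<tau>, so no occurrence of v has level below
  dist(s, v).

  Completeness: when a record R has been popped and its targets processed, every usable edge
  out of R (time at least that of R) was traversed, now or earlier, so its target has a record of
  level at most one more than R and time at most the edge time; BFS order guarantees that all
  levels are at most one more than that of R. Once the queue is empty every record has this
  covering property, and following a shortest temporal path edge by edge from the root record
  yields an occurrence of v of level at most dist(s, v).\<close>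

definition reaches_by :: "'v tedge set \<Rightarrow> real \<Rightarrow> 'v \<Rightarrow> nat \<Rightarrow> 'v \<Rightarrow> real \<Rightarrow> bool" where
  "reaches_by E ts s d x \<tau> \<longleftrightarrow> (d = 0 \<and> x = s \<and> ts \<le> \<tau>) \<or>
     (\<exists>P. temporal_path E ts s x P \<and> length P = d \<and> etime (last P) \<le> \<tau>)"

lemma temporal_path_snoc:
  assumes P: "temporal_path E ts s u P" and e: "(u, x, t) \<in> E" and le: "etime (last P) \<le> t"
  shows "temporal_path E ts s x (P @ [(u, x, t)])"
  unfolding temporal_path_def
proof (intro conjI allI impI)
  let ?Q = "P @ [(u, x, t)]"
  have ne: "P \<noteq> []" using P unfolding temporal_path_def by simp
  show "?Q \<noteq> []" "etgt (last ?Q) = x" by (simp_all add: etgt_def)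
  show "set ?Q \<subseteq> E" "esrc (hd ?Q) = s" "ts \<le> etime (hd ?Q)"
    using P e ne unfolding temporal_path_def by auto
  fix i assume i: "Suc i < length ?Q"
  show "etgt (?Q ! i) = esrc (?Q ! Suc i)" "etime (?Q ! i) \<le> etime (?Q ! Suc i)"
  proof (atomize (full), cases "Suc i < length P")
    case True
    then show "etgt (?Q ! i) = esrc (?Q ! Suc i) \<and> etime (?Q ! i) \<le> etime (?Q ! Suc i)"
      using P unfolding temporal_path_def by (simp add: nth_append)
  next
    case False
    with i have "Suc i = length P" by simp
    then have "?Q ! i = last P" "?Q ! Suc i = (u, x, t)"
      using ne by (simp_all add: nth_append last_conv_nth flip: \<open>Suc i = length P\<close>)
    then show "etgt (?Q ! i) = esrc (?Q ! Suc i) \<and> etime (?Q ! i) \<le> etime (?Q ! Suc i)"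
      using P le ne unfolding temporal_path_def by (simp add: esrc_def etime_def)
  qed
qed

lemma reaches_by_edge:
  assumes "reaches_by E ts s d u \<tau>" and "(u, x, t) \<in> E" and "\<tau> \<le> t"
  shows "reaches_by E ts s (Suc d) x t"
  using assms(1) unfolding reaches_by_def
proof (elim disjE exE conjE)
  assume "d = 0" "u = s" "ts \<le> \<tau>"
  then have "temporal_path E ts s x [(u, x, t)]"
    using assms(2,3) by (simp add: temporal_path_def esrc_def etgt_def etime_def)
  then show "(Suc d = 0 \<and> x = s \<and> ts \<le> t) \<or>
      (\<exists>P. temporal_path E ts s x P \<and> length P = Suc d \<and> etime (last P) \<le> t)"
    using \<open>d = 0\<close> by (auto simp: etime_def)
next
  fix P assume "temporal_path E ts s u P" "length P = d" "etime (last P) \<le> \<tau>"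
  then show "(Suc d = 0 \<and> x = s \<and> ts \<le> t) \<or>
      (\<exists>P. temporal_path E ts s x P \<and> length P = Suc d \<and> etime (last P) \<le> t)"
    using temporal_path_snoc[of E ts s u P x t] assms(2,3)
    by (intro disjI2 exI[of _ "P @ [(u, x, t)]"]) (auto simp: etime_def)
qed

lemma tdist_le_reaches_by:
  assumes "reaches_by E ts s d x \<tau>" and "x \<noteq> s"
  shows "tdist E ts s x \<le> d"
  using assms unfolding reaches_by_def tdist_def by (auto intro: Least_le)

lemma tdist_attained:
  assumes "t_reachable E ts x y"
  obtains P where "temporal_path E ts x y P" "length P = tdist E ts x y"
proof -
  have "\<exists>k P. temporal_path E ts x y P \<and> length P = k"
    using assms unfolding t_reachable_def by blast
  from LeastI_ex[OF this] show thesis using that unfolding tdist_def by blast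
qed

lemma mintime_attained:
  assumes "finite B" and "v \<in> targets B"
  obtains e where "e \<in> B" "etgt e = v" "etime e = mintime B v"
proof -
  have "mintime B v \<in> etime ` {e \<in> B. etgt e = v}"
    unfolding mintime_def using assms by (intro Min_in) (auto simp: targets_def)
  then show thesis using that by (metis (mono_tags, lifting) imageE mem_Collect_eq)
qed

lemma mintime_le: "finite B \<Longrightarrow> e \<in> B \<Longrightarrow> mintime B (etgt e) \<le> etime e"
  unfolding mintime_def by (intro Min_le) auto

definition child_rec :: "'v tedge set \<Rightarrow> nat \<Rightarrow> 'v \<Rightarrow> 'v bfs_state \<Rightarrow> 'v bfs_rec" where
  "child_rec B r v S = \<lparr>rv = v, rlev = Suc (rlev (recs S ! r)), rtime = mintime B v, rpred = Some r\<rparr>"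

abbreviation traverse :: "'v tedge set \<Rightarrow> nat \<Rightarrow> 'v \<Rightarrow> 'v bfs_state \<Rightarrow> 'v tedge set" where
  "traverse B r v S \<equiv> insert (rv (recs S ! r), v, mintime B v) (trav S)"

lemma process_cases:
  fixes B r v S
  defines "in_queue_at_level \<equiv> \<lambda>i. i \<in> set (que S) \<and> rv (recs S ! i) = v
             \<and> rlev (recs S ! i) = Suc (rlev (recs S ! r))"
  obtains (keep) "sig S v \<le> ereal (mintime B v)"
      "process B r v S = S\<lparr>trav := traverse B r v S\<rparr>"
  | (append) "ereal (mintime B v) < sig S v" "\<not> (\<exists>i. in_queue_at_level i)"
      "process B r v S = S\<lparr>recs := recs S @ [child_rec B r v S], que := que S @ [length (recs S)],
         sig := (sig S)(v := ereal (mintime B v)), trav := traverse B r v S\<rparr>"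
  | (update) "ereal (mintime B v) < sig S v" "\<exists>i. in_queue_at_level i"
      "process B r v S = S\<lparr>recs := map (\<lambda>i. if in_queue_at_level i then child_rec B r v S else recs S ! i)
            [0..<length (recs S)],
         sig := (sig S)(v := ereal (mintime B v)), trav := traverse B r v S\<rparr>"
proof -
  have child: "(recs S ! i)\<lparr>rtime := mintime B v, rpred := Some r\<rparr> = child_rec B r v S"
    if "rv (recs S ! i) = v" "rlev (recs S ! i) = Suc (rlev (recs S ! r))" for i
    using that by (cases "recs S ! i") (simp add: child_rec_def)
  consider "sig S v \<le> ereal (mintime B v)" | "ereal (mintime B v) < sig S v" "\<not> (\<exists>i. in_queue_at_level i)"
    | "ereal (mintime B v) < sig S v" "\<exists>i. in_queue_at_level i"
    by fastforce
  then show thesis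
  proof cases
    case 1 then show thesis
      by (intro keep) (simp_all add: process_def Let_def not_less)
  next
    case 2 then show thesis
      by (intro append) (auto simp: process_def Let_def child_rec_def in_queue_at_level_def)
  next
    case 3 then show thesis
      by (intro update) (auto simp: process_def Let_def in_queue_at_level_def child intro!: map_cong)
  qed
qed

lemma process_trav: "trav (process B r v S) = traverse B r v S"
  by (cases rule: process_cases[of S v B r]) simp_all

lemma process_recs_subset: "set (recs (process B r v S)) \<subseteq> insert (child_rec B r v S) (set (recs S))"
  by (cases rule: process_cases[of S v B r]) (auto simp: in_set_conv_nth)

lemma process_recs_unqueued:
  "i < length (recs S) \<Longrightarrow> i \<notin> set (que S) \<Longrightarrow> recs (process B r v S) ! i = recs S ! i"
  by (cases rule: process_cases[of S v B r]) (simp_all add: nth_append)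

lemma process_que:
  "(que (process B r v S) = que S \<and> length (recs (process B r v S)) = length (recs S)) \<or>
   (que (process B r v S) = que S @ [length (recs S)] \<and> recs (process B r v S) = recs S @ [child_rec B r v S])"
  by (cases rule: process_cases[of S v B r]) simp_all

lemma process_que_new:
  "set (que S) \<subseteq> set (que (process B r v S))"
  "q \<in> set (que (process B r v S)) \<Longrightarrow> q \<notin> set (que S) \<Longrightarrow> recs (process B r v S) ! q = child_rec B r v S"
  "i < length (recs (process B r v S)) \<Longrightarrow> i \<notin> set (que (process B r v S)) \<Longrightarrow> i < length (recs S)"
  using process_que[of B r v S] by auto

lemma process_sig_le:
  "sig (process B r v S) x \<le> sig S x" "sig (process B r v S) v \<le> ereal (mintime B v)"
  by (cases rule: process_cases[of S v B r]; simp add: less_imp_le)+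

lemma process_sig_lowered:
  assumes "\<forall>q\<in>set (que S). q < length (recs S)" and "sig (process B r v S) \<noteq> sig S"
  shows "sig (process B r v S) = (sig S)(v := ereal (mintime B v)) \<and>
    child_rec B r v S \<in> set (recs (process B r v S))"
proof (cases rule: process_cases[of S v B r])
  case update
  then obtain i where "i \<in> set (que S)" "rv (recs S ! i) = v" "rlev (recs S ! i) = Suc (rlev (recs S ! r))"
    by blast
  moreover have "i < length (recs S)" using assms(1) calculation(1) by blast
  ultimately have "child_rec B r v S \<in> set (recs (process B r v S))"
    using update(3) by (auto simp: in_set_conv_nth intro!: exI[of _ i])
  then show ?thesis using update(3) by simp
qed (use assms(2) in simp_all)

text \<open>The value sig x is the least time of a record of x (\<infinity> if there is none), and no traversed
  edge into x is earlier.\<close>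

definition sig_consistent :: "'v bfs_state \<Rightarrow> bool" where
  "sig_consistent S \<longleftrightarrow>
     (\<forall>x t. sig S x \<le> ereal t \<longrightarrow> (\<exists>R\<in>set (recs S). rv R = x \<and> rtime R \<le> t)) \<and>
     (\<forall>R\<in>set (recs S). sig S (rv R) \<le> ereal (rtime R)) \<and>
     (\<forall>e\<in>trav S. sig S (etgt e) \<le> ereal (etime e))"

definition refines :: "'v bfs_rec list \<Rightarrow> 'v bfs_rec list \<Rightarrow> bool" where
  "refines Rs Rs' \<longleftrightarrow> length Rs \<le> length Rs' \<and>
     (\<forall>i<length Rs. rv (Rs' ! i) = rv (Rs ! i) \<and> rlev (Rs' ! i) = rlev (Rs ! i)
        \<and> rtime (Rs' ! i) \<le> rtime (Rs ! i))"

lemma refinesD: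
  assumes "refines Rs Rs'" and "R \<in> set Rs"
  obtains R' where "R' \<in> set Rs'" "rv R' = rv R" "rlev R' = rlev R" "rtime R' \<le> rtime R"
proof -
  obtain i where "i < length Rs" "R = Rs ! i" using assms(2) by (auto simp: in_set_conv_nth)
  then show thesis
    using assms(1) that[of "Rs' ! i"] unfolding refines_def by auto
qed

lemma process_refines:
  assumes "sig_consistent S"
  shows "refines (recs S) (recs (process B r v S))"
proof (cases rule: process_cases[of S v B r])
  case update
  have "mintime B v < rtime (recs S ! i)" if "i < length (recs S)" "rv (recs S ! i) = v" for i
  proof -
    have "sig S v \<le> ereal (rtime (recs S ! i))"
      using assms nth_mem[OF that(1)] that(2) unfolding sig_consistent_def by auto
    with update(1) have "ereal (mintime B v) < ereal (rtime (recs S ! i))" by (rule less_le_trans)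
    then show ?thesis by simp
  qed
  then show ?thesis
    using update(3) unfolding refines_def by (auto simp: child_rec_def less_imp_le)
qed (simp_all add: refines_def nth_append)

lemma sig_consistent_process:
  assumes cons: "sig_consistent S" and bounded: "\<forall>q\<in>set (que S). q < length (recs S)"
  shows "sig_consistent (process B r v S)"
proof -
  let ?S' = "process B r v S" and ?N = "child_rec B r v S"
  have ref: "refines (recs S) (recs ?S')" using cons by (rule process_refines)
  note sig_le = process_sig_le[of B r v S]
  have "\<exists>R\<in>set (recs ?S'). rv R = x \<and> rtime R \<le> t" if "sig ?S' x \<le> ereal t" for x t
  proof (cases "sig ?S' x = sig S x")
    case True
    with that cons obtain R where "R \<in> set (recs S)" "rv R = x" "rtime R \<le> t"
      unfolding sig_consistent_def by auto
    with ref show ?thesis by (auto elim!: refinesD)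
  next
    case False
    then have "sig ?S' \<noteq> sig S" by auto
    then have lowered: "sig ?S' = (sig S)(v := ereal (mintime B v))" "?N \<in> set (recs ?S')"
      using process_sig_lowered[OF bounded] by blast+
    with False have "x = v" by (cases "x = v") simp_all
    then show ?thesis using that lowered by (intro bexI[of _ ?N]) (auto simp: child_rec_def)
  qed
  moreover have "sig ?S' (rv R) \<le> ereal (rtime R)" if "R \<in> set (recs ?S')" for R
  proof -
    have "R = ?N \<or> R \<in> set (recs S)" using process_recs_subset[of B r v S] that by blast
    then show ?thesis
      using cons sig_le unfolding sig_consistent_def
      by (auto simp: child_rec_def intro: order_trans[OF sig_le(1)])
  qed
  moreover have "sig ?S' (etgt e) \<le> ereal (etime e)" if "e \<in> trav ?S'" for e
    using process_trav[of B r v S] that cons sig_le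
    by (auto simp: sig_consistent_def etgt_def etime_def intro: order_trans[OF sig_le(1)])
  ultimately show ?thesis unfolding sig_consistent_def by blast
qed

lemma reaches_by_child_rec:
  assumes "reaches_by E ts s (rlev (recs S ! r)) (rv (recs S ! r)) (rtime (recs S ! r))"
    and "finite B" and "v \<in> targets B"
    and "B \<subseteq> {e \<in> E. esrc e = rv (recs S ! r) \<and> rtime (recs S ! r) \<le> etime e}"
  shows "reaches_by E ts s (rlev (child_rec B r v S)) v (rtime (child_rec B r v S))"
proof -
  obtain e where e: "e \<in> B" "etgt e = v" "etime e = mintime B v"
    using assms(2,3) by (rule mintime_attained)
  then have "(rv (recs S ! r), v, mintime B v) \<in> E" "rtime (recs S ! r) \<le> mintime B v"
    using assms(4) by (cases e; auto simp: esrc_def etgt_def etime_def)+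
  from reaches_by_edge[OF assms(1) this] show ?thesis by (simp add: child_rec_def)
qed

definition covers_out_edges :: "'v tedge set \<Rightarrow> 'v bfs_rec list \<Rightarrow> 'v bfs_rec \<Rightarrow> bool" where
  "covers_out_edges E Rs R \<longleftrightarrow> (\<forall>e\<in>E. esrc e = rv R \<and> rtime R \<le> etime e \<longrightarrow>
     (\<exists>R'\<in>set Rs. rv R' = etgt e \<and> rlev R' \<le> Suc (rlev R) \<and> rtime R' \<le> etime e))"

lemma covers_out_edges_refines:
  assumes "covers_out_edges E Rs R" and "refines Rs Rs'"
  shows "covers_out_edges E Rs' R"
  unfolding covers_out_edges_def
proof (intro ballI impI)
  fix e assume "e \<in> E" "esrc e = rv R \<and> rtime R \<le> etime e"
  then obtain R' where "R' \<in> set Rs" "rv R' = etgt e" "rlev R' \<le> Suc (rlev R)" "rtime R' \<le> etime e"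
    using assms(1) unfolding covers_out_edges_def by blast
  moreover obtain R'' where "R'' \<in> set Rs'" "rv R'' = rv R'" "rlev R'' = rlev R'" "rtime R'' \<le> rtime R'"
    using assms(2) \<open>R' \<in> set Rs\<close> by (rule refinesD)
  ultimately show "\<exists>R'\<in>set Rs'. rv R' = etgt e \<and> rlev R' \<le> Suc (rlev R) \<and> rtime R' \<le> etime e"
    by (intro bexI[of _ R'']) auto
qed

definition bfs_consistent :: "'v tedge set \<Rightarrow> real \<Rightarrow> 'v \<Rightarrow> 'v bfs_state \<Rightarrow> bool" where
  "bfs_consistent E ts s S \<longleftrightarrow>
     (\<exists>R\<in>set (recs S). rv R = s \<and> rlev R = 0 \<and> rtime R \<le> ts) \<and>
     distinct (que S) \<and> (\<forall>q\<in>set (que S). q < length (recs S)) \<and>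
     sorted (map (\<lambda>q. rlev (recs S ! q)) (que S)) \<and>
     (\<forall>R\<in>set (recs S). reaches_by E ts s (rlev R) (rv R) (rtime R)) \<and> sig_consistent S"

lemma bfs_consistent_process:
  assumes cons: "bfs_consistent E ts s S"
    and lev: "\<forall>R\<in>set (recs S). rlev R \<le> rlev (child_rec B r v S)"
    and reach: "reaches_by E ts s (rlev (child_rec B r v S)) v (rtime (child_rec B r v S))"
  shows "bfs_consistent E ts s (process B r v S)"
proof -
  let ?S' = "process B r v S" and ?N = "child_rec B r v S"
  have bounded: "\<forall>q\<in>set (que S). q < length (recs S)" using cons by (simp add: bfs_consistent_def)
  have ref: "refines (recs S) (recs ?S')"
    using cons by (intro process_refines) (simp add: bfs_consistent_def)
  have same_lev: "map (\<lambda>q. rlev (recs ?S' ! q)) (que S) = map (\<lambda>q. rlev (recs S ! q)) (que S)"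
    using ref bounded by (auto simp: refines_def)
  have "\<exists>R\<in>set (recs ?S'). rv R = s \<and> rlev R = 0 \<and> rtime R \<le> ts"
    using cons ref unfolding bfs_consistent_def by (force elim!: refinesD)
  moreover have "distinct (que ?S') \<and> (\<forall>q\<in>set (que ?S'). q < length (recs ?S')) \<and>
      sorted (map (\<lambda>q. rlev (recs ?S' ! q)) (que ?S'))"
    using process_que[of B r v S]
  proof (elim disjE conjE)
    assume q: "que ?S' = que S" "length (recs ?S') = length (recs S)"
    show ?thesis unfolding q(1) same_lev using cons q(2) unfolding bfs_consistent_def by simp
  next
    assume q: "que ?S' = que S @ [length (recs S)]" "recs ?S' = recs S @ [?N]"
    have "\<forall>q\<in>set (que S). rlev (recs S ! q) \<le> rlev ?N" using lev bounded by auto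
    then show ?thesis
      unfolding q(1) map_append same_lev unfolding q(2)
      using cons bounded unfolding bfs_consistent_def by (auto simp: sorted_append)
  qed
  moreover have "\<forall>R\<in>set (recs ?S'). reaches_by E ts s (rlev R) (rv R) (rtime R)"
    using process_recs_subset[of B r v S] cons reach unfolding bfs_consistent_def
    by (auto simp: child_rec_def)
  moreover have "sig_consistent ?S'"
    using cons bounded by (intro sig_consistent_process) (simp add: bfs_consistent_def)
  ultimately show ?thesis unfolding bfs_consistent_def by blast
qed

definition bfs_inv :: "'v tedge set \<Rightarrow> real \<Rightarrow> 'v \<Rightarrow> 'v bfs_state \<Rightarrow> bool" where
  "bfs_inv E ts s S \<longleftrightarrow> bfs_consistent E ts s S \<and>
     (\<forall>R\<in>set (recs S). \<forall>q\<in>set (que S). rlev R \<le> Suc (rlev (recs S ! q))) \<and>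
     (\<forall>i<length (recs S). i \<notin> set (que S) \<longrightarrow> covers_out_edges E (recs S) (recs S ! i))"

text \<open>The invariant while the targets of the popped record r are processed: r is the one record
  outside the queue not yet known to cover its out-edges.\<close>

definition bfs_inv_at :: "'v tedge set \<Rightarrow> real \<Rightarrow> 'v \<Rightarrow> nat \<Rightarrow> 'v bfs_state \<Rightarrow> bool" where
  "bfs_inv_at E ts s r S \<longleftrightarrow> bfs_consistent E ts s S \<and> r < length (recs S) \<and> r \<notin> set (que S) \<and>
     (\<forall>R\<in>set (recs S). rlev R \<le> Suc (rlev (recs S ! r))) \<and>
     (\<forall>q\<in>set (que S). rlev (recs S ! r) \<le> rlev (recs S ! q)) \<and>
     (\<forall>i<length (recs S). i \<noteq> r \<and> i \<notin> set (que S) \<longrightarrow> covers_out_edges E (recs S) (recs S ! i))"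

lemma bfs_inv_at_process:
  assumes inv: "bfs_inv_at E ts s r S" and fin: "finite E" and v: "v \<in> targets B"
    and B: "B \<subseteq> {e \<in> E. esrc e = rv (recs S ! r) \<and> rtime (recs S ! r) \<le> etime e}"
  shows "bfs_inv_at E ts s r (process B r v S)"
proof -
  let ?S' = "process B r v S" and ?N = "child_rec B r v S"
  have cons: "bfs_consistent E ts s S" and r: "r < length (recs S)" "r \<notin> set (que S)"
    and lev: "\<forall>R\<in>set (recs S). rlev R \<le> rlev ?N"
    and que_lev: "\<forall>q\<in>set (que S). rlev (recs S ! r) \<le> rlev (recs S ! q)"
    and closed: "\<forall>i<length (recs S). i \<noteq> r \<and> i \<notin> set (que S) \<longrightarrow> covers_out_edges E (recs S) (recs S ! i)"
    using inv unfolding bfs_inv_at_def by (auto simp: child_rec_def)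
  have bounded: "\<forall>q\<in>set (que S). q < length (recs S)" using cons by (simp add: bfs_consistent_def)
  have ref: "refines (recs S) (recs ?S')"
    using cons by (intro process_refines) (simp add: bfs_consistent_def)
  have keep_r: "recs ?S' ! r = recs S ! r" using r by (rule process_recs_unqueued)
  have "finite B" using B fin by (auto intro: finite_subset)
  then have "reaches_by E ts s (rlev ?N) v (rtime ?N)"
    using cons r v B unfolding bfs_consistent_def by (intro reaches_by_child_rec) auto
  with cons lev have "bfs_consistent E ts s ?S'" by (rule bfs_consistent_process)
  moreover have "r < length (recs ?S')" "r \<notin> set (que ?S')"
    using ref r process_que[of B r v S] by (auto simp: refines_def)
  moreover have "\<forall>R\<in>set (recs ?S'). rlev R \<le> Suc (rlev (recs ?S' ! r))"
    using process_recs_subset[of B r v S] lev keep_r by (auto simp: child_rec_def)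
  moreover have "rlev (recs ?S' ! r) \<le> rlev (recs ?S' ! q)" if "q \<in> set (que ?S')" for q
    using that process_que_new(2)[OF that] que_lev ref bounded keep_r
    by (cases "q \<in> set (que S)") (auto simp: refines_def child_rec_def)
  moreover have "covers_out_edges E (recs ?S') (recs ?S' ! i)"
    if "i < length (recs ?S')" "i \<noteq> r" "i \<notin> set (que ?S')" for i
  proof -
    have "i < length (recs S)" "i \<notin> set (que S)"
      using process_que_new(1)[of S B r v] process_que_new(3)[OF that(1,3)] that(3) by auto
    then show ?thesis
      using closed that(2) ref process_recs_unqueued[of i S B r v] covers_out_edges_refines by metis
  qed
  ultimately show ?thesis unfolding bfs_inv_at_def by blast
qed

lemma bfs_inv_at_fold_process:
  assumes "bfs_inv_at E ts s r S" and "finite E" and "set vs \<subseteq> targets B"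
    and "B \<subseteq> {e \<in> E. esrc e = rv (recs S ! r) \<and> rtime (recs S ! r) \<le> etime e}"
  shows "bfs_inv_at E ts s r (fold (process B r) vs S) \<and> recs (fold (process B r) vs S) ! r = recs S ! r"
  using assms
proof (induction vs arbitrary: S)
  case (Cons v vs)
  have "recs (process B r v S) ! r = recs S ! r"
    using Cons.prems(1) unfolding bfs_inv_at_def by (intro process_recs_unqueued) auto
  then show ?case using Cons bfs_inv_at_process[of E ts s r S v B] by simp
qed simp

lemma fold_process_sig_le: "sig (fold (process B r) vs S) x \<le> sig S x"
  by (induction vs arbitrary: S) (auto intro: order_trans process_sig_le(1))

lemma fold_process_sig_le_mintime:
  "v \<in> set vs \<Longrightarrow> sig (fold (process B r) vs S) v \<le> ereal (mintime B v)"
proof (induction vs arbitrary: S)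
  case (Cons u vs)
  show ?case
  proof (cases "v \<in> set vs")
    case False
    with Cons.prems have "u = v" by simp
    then show ?thesis
      using fold_process_sig_le[of B r vs "process B r u S" v] process_sig_le(2)[of B r v S] by simp
  qed (use Cons.IH in simp)
qed simp

lemma covers_out_edges_after_scan:
  assumes cons: "sig_consistent S" and fin: "finite E" and vs: "set vs = targets (Bset E S r)"
    and S': "S' = fold (process (Bset E S r) r) vs S"
    and after: "sig_consistent S'" "\<forall>R\<in>set (recs S'). rlev R \<le> Suc (rlev (recs S ! r))"
  shows "covers_out_edges E (recs S') (recs S ! r)"
  unfolding covers_out_edges_def
proof (intro ballI impI)
  fix e assume e: "e \<in> E" "esrc e = rv (recs S ! r) \<and> rtime (recs S ! r) \<le> etime e"
  have "sig S' (etgt e) \<le> ereal (etime e)"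
  proof (cases "e \<in> trav S")
    case True
    then show ?thesis
      using cons fold_process_sig_le[of "Bset E S r" r vs S "etgt e"]
      unfolding S' sig_consistent_def by (auto intro: order_trans)
  next
    case False
    then have eB: "e \<in> Bset E S r" using e unfolding Bset_def by auto
    then have "etgt e \<in> set vs" using vs unfolding targets_def by auto
    then have "sig S' (etgt e) \<le> ereal (mintime (Bset E S r) (etgt e))"
      unfolding S' by (rule fold_process_sig_le_mintime)
    also have "\<dots> \<le> ereal (etime e)"
      using mintime_le[OF _ eB] fin by (simp add: Bset_def)
    finally show ?thesis .
  qed
  then obtain R' where "R' \<in> set (recs S')" "rv R' = etgt e" "rtime R' \<le> etime e"
    using after(1) unfolding sig_consistent_def by blast
  with after(2) show "\<exists>R'\<in>set (recs S'). rv R' = etgt e \<and> rlev R' \<le> Suc (rlev (recs S ! r)) \<and> rtime R' \<le> etime e"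
    by blast
qed

lemma bfs_inv_at_pop:
  assumes "bfs_inv E ts s S" and "que S = r # rest"
  shows "bfs_inv_at E ts s r (S\<lparr>que := rest\<rparr>)"
  using assms unfolding bfs_inv_def bfs_inv_at_def bfs_consistent_def sig_consistent_def
  by auto

lemma bfs_inv_of_bfs_inv_at:
  assumes "bfs_inv_at E ts s r S" and "covers_out_edges E (recs S) (recs S ! r)"
  shows "bfs_inv E ts s S"
  using assms unfolding bfs_inv_def bfs_inv_at_def by fastforce

lemma bfs_inv_step:
  assumes inv: "bfs_inv E ts s S" and step: "bfs_step E S S'" and fin: "finite E"
  shows "bfs_inv E ts s S'"
proof -
  obtain r rest vs where q: "que S = r # rest" and vs: "set vs = targets (Bset E S r)"
    and S': "S' = fold (process (Bset E S r) r) vs (S\<lparr>que := rest\<rparr>)"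
    using step unfolding bfs_step_def by blast
  let ?S1 = "S\<lparr>que := rest\<rparr>"
  have B: "Bset E S r = Bset E ?S1 r" by (simp add: Bset_def)
  have "bfs_inv_at E ts s r ?S1" using inv q by (rule bfs_inv_at_pop)
  then have at: "bfs_inv_at E ts s r S'" and keep: "recs S' ! r = recs ?S1 ! r"
    using bfs_inv_at_fold_process[of E ts s r ?S1 vs "Bset E ?S1 r"] fin vs
    unfolding S' B by (auto simp: Bset_def)
  have "sig_consistent ?S1"
    using inv unfolding bfs_inv_def bfs_consistent_def sig_consistent_def by simp
  moreover have "sig_consistent S'" "\<forall>R\<in>set (recs S'). rlev R \<le> Suc (rlev (recs ?S1 ! r))"
    using at keep unfolding bfs_inv_at_def bfs_consistent_def by simp_all
  ultimately have "covers_out_edges E (recs S') (recs ?S1 ! r)"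
    using fin vs S' unfolding B by (intro covers_out_edges_after_scan)
  with at keep show ?thesis by (intro bfs_inv_of_bfs_inv_at[of E ts s r]) simp_all
qed

lemma bfs_inv_init: "bfs_inv E ts s (bfs_init s ts)"
  by (auto simp: bfs_inv_def bfs_consistent_def sig_consistent_def bfs_init_def reaches_by_def
      split: if_splits)

lemma bfs_inv_reachable:
  assumes "(bfs_step E)\<^sup>*\<^sup>* (bfs_init s ts) S" and "finite E"
  shows "bfs_inv E ts s S"
  using assms(1) by induction (auto intro: bfs_inv_init bfs_inv_step[OF _ _ assms(2)])

lemma covers_out_edges_path:
  assumes covered: "\<forall>R\<in>set Rs. covers_out_edges E Rs R"
    and root: "R0 \<in> set Rs" "rv R0 = s" "rlev R0 = 0" "rtime R0 \<le> ts"
    and P: "temporal_path E ts s y P"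
  shows "\<exists>R\<in>set Rs. rv R = y \<and> rlev R \<le> length P"
proof -
  have step: "\<exists>R'\<in>set Rs. rv R' = etgt e \<and> rlev R' \<le> Suc k \<and> rtime R' \<le> etime e"
    if "R \<in> set Rs" "rlev R \<le> k" "e \<in> E" "esrc e = rv R" "rtime R \<le> etime e" for R k e
  proof -
    from covered that(1) have "covers_out_edges E Rs R" ..
    with that(3-5) obtain R' where "R' \<in> set Rs" "rv R' = etgt e" "rlev R' \<le> Suc (rlev R)" "rtime R' \<le> etime e"
      unfolding covers_out_edges_def by blast
    with that(2) show ?thesis by auto
  qed
  have "\<exists>R\<in>set Rs. rv R = etgt (P ! i) \<and> rlev R \<le> Suc i \<and> rtime R \<le> etime (P ! i)"
    if "i < length P" for i
    using that
  proof (induction i)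
    case 0
    then have "P ! 0 \<in> E" "esrc (P ! 0) = rv R0" "rtime R0 \<le> etime (P ! 0)"
      using P root unfolding temporal_path_def by (auto simp: hd_conv_nth)
    with root(1,3) show ?case by (intro step) auto
  next
    case (Suc i)
    then obtain R where R: "R \<in> set Rs" "rv R = etgt (P ! i)" "rlev R \<le> Suc i" "rtime R \<le> etime (P ! i)"
      by auto
    have "P ! Suc i \<in> E" "esrc (P ! Suc i) = rv R" "rtime R \<le> etime (P ! Suc i)"
      using P Suc.prems R(2,4) unfolding temporal_path_def by (auto intro: order_trans)
    with R(1,3) show ?case by (rule step)
  qed
  moreover have "P \<noteq> []" "etgt (P ! (length P - 1)) = y"
    using P unfolding temporal_path_def by (auto simp: last_conv_nth)
  ultimately show ?thesis by (metis Suc_diff_1 diff_less length_greater_0_conv less_one)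
qed

lemma occ_levels_eq: "occ_levels S v = rlev ` {R \<in> set (recs S). rv R = v}"
  unfolding occ_levels_def by (auto simp: in_set_conv_nth)

theorem lemma12:
  fixes V :: "'v set" and E :: "'v tedge set" and s v :: 'v and ts :: real and S :: "'v bfs_state"
  assumes "finite V" and "finite E"
    and "\<forall>(x, y, t) \<in> E. x \<in> V \<and> y \<in> V \<and> x \<noteq> y"
    and "s \<in> V"
    and "(bfs_step E)\<^sup>*\<^sup>* (bfs_init s ts) S" and "que S = []"
    and "v \<noteq> s" and "t_reachable E ts s v"
  shows "occ_levels S v \<noteq> {} \<and> Min (occ_levels S v) = tdist E ts s v"
proof -
  have inv: "bfs_inv E ts s S" using assms(5,2) by (rule bfs_inv_reachable)
  then obtain R0 where root: "R0 \<in> set (recs S)" "rv R0 = s" "rlev R0 = 0" "rtime R0 \<le> ts"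
    and sound: "\<forall>R\<in>set (recs S). reaches_by E ts s (rlev R) (rv R) (rtime R)"
    unfolding bfs_inv_def bfs_consistent_def by blast
  have covered: "\<forall>R\<in>set (recs S). covers_out_edges E (recs S) R"
    using inv assms(6) unfolding bfs_inv_def by (auto simp: in_set_conv_nth)
  obtain P where "temporal_path E ts s v P" "length P = tdist E ts s v"
    using assms(8) by (rule tdist_attained)
  then obtain R where R: "R \<in> set (recs S)" "rv R = v" "rlev R \<le> tdist E ts s v"
    using covers_out_edges_path[OF covered root] by metis
  have lower: "tdist E ts s v \<le> l" if "l \<in> occ_levels S v" for l
    using that sound assms(7) tdist_le_reaches_by unfolding occ_levels_eq by fastforce
  have "rlev R \<in> occ_levels S v" using R unfolding occ_levels_eq by blast
  moreover from lower[OF this] R(3) have "rlev R = tdist E ts s v" by simp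
  moreover have "finite (occ_levels S v)" unfolding occ_levels_eq by simp
  ultimately show ?thesis using lower by (auto intro: Min_eqI)
qed

end
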